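(* Let $\mathcal{X}$ be a set and let $k:\mathcal{X}\times\mathcal{X}\to\mathbb{R}_{\ge 0}$ be a symmetric positive semidefinite function (i.e. for every finite subset $\{x_1,\dots,x_m\}\subseteq\mathcal{X}$ the matrix $(k(x_i,x_j))_{i,j}$ is positive semidefinite) whose image $\{k(x,y):x,y\in\mathcal{X}\}$ has exactly two elements. Then $k$ is a strong kernel.
   Context: A strong kernel on a set $\mathcal{X}$ is a symmetric function $k:\mathcal{X}\times\mathcal{X}\to\mathbb{R}_{\ge 0}$ such that $k(x,y)\ge\min\{k(x,z),k(z,y)\}$ for all $x,y,z\in\mathcal{X}$. *)

theory Defs
  imports Complex_Main
begin

definition nonneg_sym_kernel :: "'a set \<Rightarrow> ('a \<Rightarrow> 'a \<Rightarrow> real) \<Rightarrow> bool" where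
  "nonneg_sym_kernel X k \<longleftrightarrow>
     (\<forall>x\<in>X. \<forall>y\<in>X. k x y \<ge> 0 \<and> k x y = k y x)"

definition psd_kernel :: "'a set \<Rightarrow> ('a \<Rightarrow> 'a \<Rightarrow> real) \<Rightarrow> bool" where
  "psd_kernel X k \<longleftrightarrow>
     (\<forall>S c. finite S \<longrightarrow> S \<subseteq> X \<longrightarrow>
        (\<Sum>x\<in>S. \<Sum>y\<in>S. c x * c y * k x y) \<ge> 0)"

definition strong_kernel :: "'a set \<Rightarrow> ('a \<Rightarrow> 'a \<Rightarrow> real) \<Rightarrow> bool" where
  "strong_kernel X k \<longleftrightarrow> nonneg_sym_kernel X k \<and>
     (\<forall>x\<in>X. \<forall>y\<in>X. \<forall>z\<in>X. k x y \<ge> min (k x z) (k z y))"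

end

theory Submission
  imports Defs
begin

text \<open>If k took the value a < b with k x y = a and k x z = k z y = b, then testing the Gram
  matrix with the vector (1, -1) on {x, z} (when x = y) or with (1, 1, -2) on {x, y, z}
  (when x \<noteq> y) gives a negative quadratic form, since every diagonal entry is at most b.\<close>

lemma psd_kernelD:
  assumes "psd_kernel X k" "finite S" "S \<subseteq> X"
  shows "0 \<le> (\<Sum>x\<in>S. \<Sum>y\<in>S. c x * c y * k x y)"
  using assms unfolding psd_kernel_def by blast

lemma nonneg_sym_kernel_sym:
  assumes "nonneg_sym_kernel X k" "x \<in> X" "y \<in> X"
  shows "k x y = k y x"
  using assms unfolding nonneg_sym_kernel_def by blast

lemma psd_kernel_pair:
  assumes "nonneg_sym_kernel X k" "psd_kernel X k"
    and "x \<in> X" "z \<in> X" "x \<noteq> z"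
  shows "2 * k x z \<le> k x x + k z z"
proof -
  define c where "c = (\<lambda>u. if u = x then (1::real) else -1)"
  have "0 \<le> (\<Sum>u\<in>{x,z}. \<Sum>v\<in>{x,z}. c u * c v * k u v)"
    using assms(3,4) by (intro psd_kernelD[OF assms(2)]) auto
  also have "\<dots> = k x x - k x z - k z x + k z z"
    using \<open>x \<noteq> z\<close> by (simp add: c_def)
  finally show ?thesis
    using nonneg_sym_kernel_sym[OF assms(1,4,3)] by simp
qed

lemma psd_kernel_triple:
  assumes "nonneg_sym_kernel X k" "psd_kernel X k"
    and "x \<in> X" "y \<in> X" "z \<in> X" "x \<noteq> y" "x \<noteq> z" "y \<noteq> z"
  shows "4 * (k x z + k y z) \<le> k x x + k y y + 2 * k x y + 4 * k z z"
proof -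
  define c where "c = (\<lambda>u. if u = z then (-2::real) else 1)"
  have "0 \<le> (\<Sum>u\<in>{x,y,z}. \<Sum>v\<in>{x,y,z}. c u * c v * k u v)"
    using assms(3-5) by (intro psd_kernelD[OF assms(2)]) auto
  also have "\<dots> = k x x + k x y - 2 * k x z + k y x + k y y - 2 * k y z
                   - 2 * k z x - 2 * k z y + 4 * k z z"
    using assms(6-8) by (simp add: c_def)
  finally show ?thesis
    using nonneg_sym_kernel_sym[OF assms(1,4,3)] nonneg_sym_kernel_sym[OF assms(1,5,3)]
      nonneg_sym_kernel_sym[OF assms(1,5,4)] by simp
qed

lemma strong_kernel_if_two_valued:
  assumes sym: "nonneg_sym_kernel X k" and psd: "psd_kernel X k"
    and vals: "\<And>x y. x \<in> X \<Longrightarrow> y \<in> X \<Longrightarrow> k x y \<in> {a, b}"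
  shows "strong_kernel X k"
proof -
  have "min (k x z) (k z y) \<le> k x y" if xyz: "x \<in> X" "y \<in> X" "z \<in> X" for x y z
  proof (rule ccontr)
    assume "\<not> ?thesis"
    then have lt: "k x y < k x z" "k x y < k z y" by auto
    have ab: "{a, b} = {k x y, k x z}"
      using vals[of x y] vals[of x z] xyz lt by fastforce
    have top: "k u v \<le> k x z" if "u \<in> X" "v \<in> X" for u v
      using vals[OF that] lt unfolding ab by auto
    have "k z y \<in> {k x y, k x z}"
      using vals[of z y] xyz unfolding ab by blast
    then have kzy: "k z y = k x z"
      using lt by auto
    have kyz: "k y z = k z y"
      using nonneg_sym_kernel_sym[OF sym xyz(2,3)] .
    have "x \<noteq> z" "y \<noteq> z"
      using lt by auto
    show False
    proof (cases "x = y")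
      case True
      then show False
        using psd_kernel_pair[OF sym psd \<open>x \<in> X\<close> \<open>z \<in> X\<close> \<open>x \<noteq> z\<close>] top[OF xyz(3,3)] lt
        by simp
    next
      case False
      then show False
        using psd_kernel_triple[OF sym psd xyz False \<open>x \<noteq> z\<close> \<open>y \<noteq> z\<close>]
          top[OF xyz(1,1)] top[OF xyz(2,2)] top[OF xyz(3,3)] lt kzy kyz
        by argo
    qed
  qed
  then show ?thesis
    using sym unfolding strong_kernel_def by blast
qed

theorem mainTheorem5:
  fixes X :: "'a set" and k :: "'a \<Rightarrow> 'a \<Rightarrow> real"
  assumes "nonneg_sym_kernel X k"
    and "psd_kernel X k"
    and "card {k x y | x y. x \<in> X \<and> y \<in> X} = 2"
  shows "strong_kernel X k"
proof -
  obtain a b where "{k x y | x y. x \<in> X \<and> y \<in> X} = {a, b}"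
    using assms(3) by (auto simp: card_2_iff)
  then have "k x y \<in> {a, b}" if "x \<in> X" "y \<in> X" for x y
    using that by blast
  then show ?thesis
    using strong_kernel_if_two_valued[OF assms(1,2)] by blast
qed

end
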